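(* Let $1\le d\le n$ be integers with $\gcd(n,d)=1$, and let $2^a$ be the largest power of $2$ dividing $n$. Then $(n,d)$ is a critical pair if and only if $d^2\equiv1\pmod n$, $a\ge1$, and $d\equiv\pm1\pmod{2^a}$.
   Context: A pair of positive integers $(n,d)$ with $d<n$ and $\gcd(n,d)=1$ is a critical pair if the Hirzebruch–Jung expansion $(a_0,\dots,a_r)$ of $n/d$ (defined by $\frac nd=a_0-1/(a_1-1/(\cdots-1/a_r))$, $a_i\ge2$) is symmetric ($a_i=a_{r-i}$ for all $i$), of odd length ($r$ even), and has even central term $a_{r/2}$. The pair $(1,1)$ is not critical. *)

theory Defs
  imports "HOL-Computational_Algebra.Computational_Algebra" "HOL-Number_Theory.Cong"
begin

text \<open>Hirzebruch-Jung (negative) continued fraction expansion of n/d, for 0 < d: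
  n/d = a0 - 1/(a1 - 1/(... - 1/ar)).\<close>
function hj_expansion :: "nat \<Rightarrow> nat \<Rightarrow> nat list" where
  "hj_expansion n d =
     (if d = 0 then []
      else (let a0 = (n + d - 1) div d; r = a0 * d - n in
            if r = 0 then [a0] else a0 # hj_expansion d r))"
  by pat_completeness auto
termination
proof (relation "measure snd", goal_cases)
  case 1 then show ?case by simp
next
  case (2 n d a0 r)
  define k where "k = (n + d - 1) div d * d"
  have "k \<le> n + d - 1" unfolding k_def by (rule div_times_less_eq_dividend)
  then have "k - n < d" using 2(1) by linarith
  then show ?case using 2 by (simp add: k_def)
qed

definition critical_pair :: "nat \<Rightarrow> nat \<Rightarrow> bool" where
  "critical_pair n d \<longleftrightarrow>
     0 < d \<and> d < n \<and> coprime n d \<and>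
     (let as = hj_expansion n d in
        rev as = as \<and> odd (length as) \<and> even (as ! (length as div 2)))"

end

theory Submission
  imports Defs
begin

text \<open>Write \<open>M(a)\<close> for the matrix \<open>[[a, -1], [1, 0]]\<close> of the Moebius map \<open>z \<mapsto> a - 1/z\<close>.
  If \<open>(a\<^sub>0, \<dots>, a\<^sub>r)\<close> is the expansion of \<open>n/d\<close>, then \<open>M(a\<^sub>0)\<cdots>M(a\<^sub>r) = [[n, x], [d, y]]\<close>
  has determinant 1, and reversing the expansion replaces this product by \<open>[[n, -d], [-x, y]]\<close>.
  Since an expansion is determined by the first column of its product, the expansion is a
  palindrome iff \<open>x = -d\<close>, i.e. iff \<open>d\<^sup>2 \<equiv> 1 (mod n)\<close>.  Writing a palindrome as
  \<open>u c u\<^sup>R\<close> or \<open>u u\<^sup>R\<close> and expanding the product in terms of \<open>M(u) = [[A, B], [C, D]]\<close>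
  factors \<open>n\<close>, \<open>d - 1\<close> and \<open>d + 1\<close> simultaneously; the parity of the central term then
  decides whether the 2-part of \<open>n\<close> divides \<open>d - 1\<close> or \<open>d + 1\<close>.\<close>

declare hj_expansion.simps [simp del]

type_synonym mat2 = "int \<times> int \<times> int \<times> int"

fun mat2_mult :: "mat2 \<Rightarrow> mat2 \<Rightarrow> mat2" where
  "mat2_mult (a, b, c, d) (e, f, g, h) = (a*e + b*g, a*f + b*h, c*e + d*g, c*f + d*h)"

fun mat2_det :: "mat2 \<Rightarrow> int" where
  "mat2_det (a, b, c, d) = a*d - b*c"

text \<open>Transposition conjugated by \<open>diag(1, -1)\<close>: an anti-automorphism fixing every \<open>M(a)\<close>.\<close>

fun mat2_flip :: "mat2 \<Rightarrow> mat2" where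
  "mat2_flip (a, b, c, d) = (a, -c, -b, d)"

definition hj_step_matrix :: "int \<Rightarrow> mat2" where
  "hj_step_matrix a = (a, -1, 1, 0)"

fun hj_matrix :: "nat list \<Rightarrow> mat2" where
  "hj_matrix [] = (1, 0, 0, 1)"
| "hj_matrix (a # as) = mat2_mult (hj_step_matrix (int a)) (hj_matrix as)"

lemma mat2_mult_assoc: "mat2_mult (mat2_mult x y) z = mat2_mult x (mat2_mult y z)"
  by (cases x; cases y; cases z) (simp add: algebra_simps)

lemma mat2_mult_one [simp]: "mat2_mult x (1, 0, 0, 1) = x" "mat2_mult (1, 0, 0, 1) x = x"
  by (cases x; simp)+

lemma mat2_det_mult: "mat2_det (mat2_mult x y) = mat2_det x * mat2_det y"
  by (cases x; cases y) (simp add: algebra_simps)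

lemma mat2_flip_mult: "mat2_flip (mat2_mult x y) = mat2_mult (mat2_flip y) (mat2_flip x)"
  by (cases x; cases y) (simp add: algebra_simps)

lemma hj_matrix_append: "hj_matrix (xs @ ys) = mat2_mult (hj_matrix xs) (hj_matrix ys)"
  by (induction xs) (simp_all add: mat2_mult_assoc)

lemma mat2_det_hj_matrix: "mat2_det (hj_matrix as) = 1"
  by (induction as) (simp_all add: mat2_det_mult hj_step_matrix_def)

lemma hj_matrix_rev: "hj_matrix (rev as) = mat2_flip (hj_matrix as)"
proof (induction as)
  case (Cons a as)
  have "hj_matrix (rev (a # as)) = mat2_mult (mat2_flip (hj_matrix as)) (hj_matrix [a])"
    by (simp add: hj_matrix_append Cons)
  also have "\<dots> = mat2_flip (hj_matrix (a # as))"
    by (simp add: mat2_flip_mult hj_step_matrix_def)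
  finally show ?case .
qed simp

lemma hj_expansion_unfold:
  fixes n d :: nat
  assumes "0 < d"
  defines "a0 \<equiv> (n + d - 1) div d"
  shows "hj_expansion n d = (if a0 * d = n then [a0] else a0 # hj_expansion d (a0 * d - n))"
    and "n \<le> a0 * d" and "a0 * d < n + d"
proof -
  have "a0 * d + (n + d - 1) mod d = n + d - 1" "(n + d - 1) mod d < d"
    using assms by (simp_all add: a0_def)
  then show "n \<le> a0 * d" "a0 * d < n + d" by linarith+
  then show "hj_expansion n d = (if a0 * d = n then [a0] else a0 # hj_expansion d (a0 * d - n))"
    using assms by (subst hj_expansion.simps) (auto simp: Let_def a0_def)
qed

lemma coprime_mult_diff_nat:
  fixes n d a :: nat
  assumes "coprime n d" "n \<le> a * d"
  shows "coprime d (a * d - n)"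
proof -
  have "gcd (int d) (int a * int d + - int n) = gcd (int d) (int n)"
    by (simp only: gcd_add_mult gcd_neg2_int)
  then have "coprime (int d) (int (a * d - n))"
    using assms by (simp add: of_nat_diff coprime_iff_gcd_eq_1 gcd.commute)
  then show ?thesis by simp
qed

lemma hj_matrix_hj_expansion:
  assumes "0 < d" "coprime n d"
  shows "\<exists>x y. hj_matrix (hj_expansion n d) = (int n, x, int d, y)"
  using assms
proof (induction n d rule: hj_expansion.induct)
  case (1 n d)
  define a0 where "a0 = (n + d - 1) div d"
  note unfold = hj_expansion_unfold[OF \<open>0 < d\<close>, of n, folded a0_def]
  show ?case
  proof (cases "a0 * d = n")
    case True
    then have "d = 1" using \<open>coprime n d\<close> by auto
    then show ?thesis using True unfold(1) by (simp add: hj_step_matrix_def)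
  next
    case False
    define r where "r = a0 * d - n"
    have "coprime d r"
      using coprime_mult_diff_nat[OF \<open>coprime n d\<close> unfold(2)] by (simp add: r_def)
    moreover have "0 < r" using False unfold(2) by (simp add: r_def)
    ultimately obtain x y where "hj_matrix (hj_expansion d r) = (int d, x, int r, y)"
      using "1.IH"[OF _ a0_def r_def] \<open>0 < d\<close> by auto
    moreover have "int n = int a0 * int d - int r" using unfold(2) by (simp add: r_def)
    ultimately show ?thesis using False unfold(1) by (simp add: r_def hj_step_matrix_def)
  qed
qed

lemma hj_expansion_ge_2:
  assumes "0 < d" "d < n" "a \<in> set (hj_expansion n d)"
  shows "2 \<le> a"
  using assms
proof (induction n d rule: hj_expansion.induct)
  case (1 n d)
  define a0 where "a0 = (n + d - 1) div d"
  note unfold = hj_expansion_unfold[OF \<open>0 < d\<close>, of n, folded a0_def]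
  have "1 * d < a0 * d" using unfold(2) \<open>d < n\<close> by linarith
  then have "2 \<le> a0" by (simp only: mult_less_cancel2) linarith
  moreover have "2 \<le> a" if "a \<in> set (hj_expansion d (a0 * d - n))" "a0 * d \<noteq> n"
    using "1.IH"[OF _ a0_def refl] that unfold(2,3) \<open>0 < d\<close> by simp
  ultimately show ?case using unfold(1) \<open>a \<in> set (hj_expansion n d)\<close> by (auto split: if_splits)
qed

lemma hj_expansion_hj_matrix:
  assumes "as \<noteq> []" "\<forall>a \<in> set as. 2 \<le> a" "hj_matrix as = (P, x, Q, y)"
  shows "0 < Q \<and> Q < P \<and> hj_expansion (nat P) (nat Q) = as"
  using assms
proof (induction as arbitrary: P x Q y)
  case (Cons a bs)
  have "2 \<le> a" using Cons.prems(2) by simp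
  show ?case
  proof (cases "bs = []")
    case True
    then have "P = int a" "Q = 1" using Cons.prems(3) by (simp_all add: hj_step_matrix_def)
    then show ?thesis
      using True \<open>2 \<le> a\<close> hj_expansion_unfold(1)[of 1 a] by simp
  next
    case False
    obtain P' x' Q' y' where bs: "hj_matrix bs = (P', x', Q', y')"
      by (cases "hj_matrix bs") auto
    have IH': "0 < Q'" "Q' < P'" "hj_expansion (nat P') (nat Q') = bs"
      using Cons.IH[OF False _ bs] Cons.prems(2) by simp_all
    define m q where "m = nat P'" and "q = nat Q'"
    have IH: "P' = int m" "Q' = int q" "0 < q" "q < m" "hj_expansion m q = bs"
      using IH' by (simp_all add: m_def q_def)
    have P: "P = int a * int m - int q" and "Q = int m"
      using Cons.prems(3) bs IH(1,2) by (auto simp: hj_step_matrix_def)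
    have "2 * m \<le> a * m" using \<open>2 \<le> a\<close> by simp
    define n where "n = a * m - q"
    have "m < n" "q \<le> a * m" using IH(4) \<open>2 * m \<le> a * m\<close> unfolding n_def by linarith+
    then have "P = int n" using P by (simp add: n_def of_nat_diff)
    have split: "n + m - 1 = (m - q - 1) + a * m"
      using IH(3,4) \<open>q \<le> a * m\<close> unfolding n_def by linarith
    have "m \<noteq> 0" using IH(4) by simp
    then have "(n + m - 1) div m = a + (m - q - 1) div m"
      unfolding split by (rule div_mult_self1)
    then have "(n + m - 1) div m = a" using IH(4) by simp
    moreover have "a * m - n = q" using \<open>q \<le> a * m\<close> by (simp add: n_def)
    ultimately have "hj_expansion n m = a # bs"
      using hj_expansion_unfold(1)[of m n] IH by simp
    then show ?thesis using \<open>Q = int m\<close> \<open>P = int n\<close> \<open>m < n\<close> IH(3,4) by simp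
  qed
qed simp

lemma hj_expansion_palindrome_iff:
  assumes "0 < d" "d < n" "coprime n d"
  shows "rev (hj_expansion n d) = hj_expansion n d \<longleftrightarrow> [d\<^sup>2 = 1] (mod n)"
proof -
  define as where "as = hj_expansion n d"
  obtain x y where M: "hj_matrix as = (int n, x, int d, y)"
    using hj_matrix_hj_expansion[OF \<open>0 < d\<close> \<open>coprime n d\<close>] by (auto simp: as_def)
  have Mrev: "hj_matrix (rev as) = (int n, - int d, - x, y)"
    using M by (simp add: hj_matrix_rev)
  have "int n * y - x * int d = 1" using mat2_det_hj_matrix[of as] M by simp
  then have "- x * int d - 1 = int n * (- y)" by (simp add: algebra_simps)
  then have inverse: "[- x * int d = 1] (mod int n)"
    by (simp add: cong_iff_dvd_diff)
  have square: "[d\<^sup>2 = 1] (mod n) \<longleftrightarrow> [int d * int d = 1] (mod int n)"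
    by (simp add: power2_eq_square flip: cong_int_iff)
  have "rev as = as \<longleftrightarrow> [d\<^sup>2 = 1] (mod n)"
  proof
    assume "rev as = as"
    then have "fst (snd (hj_matrix (rev as))) = fst (snd (hj_matrix as))" by simp
    then have "x = - int d" using M Mrev by simp
    with inverse square show "[d\<^sup>2 = 1] (mod n)" by simp
  next
    assume "[d\<^sup>2 = 1] (mod n)"
    then have "[1 = int d * int d] (mod int n)" using square by (simp add: cong_sym_eq)
    with inverse have "[- x * int d = int d * int d] (mod int n)" by (rule cong_trans)
    moreover have "coprime (int d) (int n)" using \<open>coprime n d\<close> by (simp add: ac_simps)
    ultimately have "[- x = int d] (mod int n)" by (simp only: cong_mult_rcancel)
    have "rev as \<noteq> []"
      using hj_expansion_unfold(1)[OF \<open>0 < d\<close>] by (simp add: as_def)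
    moreover have "\<forall>a \<in> set (rev as). 2 \<le> a"
      using hj_expansion_ge_2[OF \<open>0 < d\<close> \<open>d < n\<close>] by (simp add: as_def)
    ultimately have "0 < - x" "- x < int n" and rev_as: "hj_expansion n (nat (- x)) = rev as"
      using hj_expansion_hj_matrix[OF _ _ Mrev] by simp_all
    with \<open>[- x = int d] (mod int n)\<close> have "- x = int d"
      using \<open>d < n\<close> cong_less_imp_eq_int[of "- x" "int n" "int d"] by simp
    then show "rev as = as" using rev_as by (simp add: as_def)
  qed
  then show ?thesis by (simp add: as_def)
qed

lemma cong_pm_one_pow2I:
  fixes n d p q r s :: int
  assumes "n = 2 * p * q" "d - 1 = 2 * p * r" "d + 1 = 2 * q * s"
    and "odd p \<or> odd q" and "2 ^ a dvd n"
  shows "[d = 1] (mod 2 ^ a) \<or> [d = - 1] (mod 2 ^ a)"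
proof (cases "odd q")
  case True
  then have "2 ^ a dvd 2 * p" using assms(1,5) by (simp add: coprime_dvd_mult_left_iff)
  then have "2 ^ a dvd d - 1" using assms(2) by simp
  then show ?thesis by (simp add: cong_iff_dvd_diff)
next
  case False
  then have "coprime (2 ^ a) p" using assms(4) by simp
  moreover have "2 ^ a dvd 2 * q * p" using assms(1,5) by (simp add: ac_simps)
  ultimately have "2 ^ a dvd 2 * q" by (simp add: coprime_dvd_mult_left_iff)
  then have "2 ^ a dvd d + 1" using assms(3) by simp
  then show ?thesis by (simp add: cong_iff_dvd_diff)
qed

lemma not_cong_pm_one_pow2I:
  fixes n d p q r s :: int
  assumes "n = p * q" "d - 1 = p * r" "d + 1 = q * s" and "odd r" "odd s"
    and "even n" "2 ^ a dvd n" "\<not> 2 ^ Suc a dvd n"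
  shows "\<not> [d = 1] (mod 2 ^ a) \<and> \<not> [d = - 1] (mod 2 ^ a)"
proof -
  have "q * s = p * r + 2" using assms(2,3) by linarith
  then have "even (q * s) \<longleftrightarrow> even (p * r)" by simp
  then have "even p \<longleftrightarrow> even q" using \<open>odd r\<close> \<open>odd s\<close> by simp
  then have "even p" "even q" using \<open>even n\<close> \<open>n = p * q\<close> by auto
  have "\<not> 2 ^ a dvd p"
  proof
    assume "2 ^ a dvd p"
    then have "2 ^ a * 2 dvd p * q" using \<open>even q\<close> by (rule mult_dvd_mono)
    with assms(1,8) show False by (simp add: mult.commute)
  qed
  moreover have "\<not> 2 ^ a dvd q"
  proof
    assume "2 ^ a dvd q"
    with \<open>even p\<close> have "2 * 2 ^ a dvd p * q" by (rule mult_dvd_mono)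
    with assms(1,8) show False by simp
  qed
  ultimately show ?thesis
    using assms(2-5) by (simp add: cong_iff_dvd_diff coprime_dvd_mult_left_iff)
qed

lemma palindrome_odd_length_decomp:
  assumes "rev xs = xs" "length xs = 2 * k + 1"
  shows "xs = take k xs @ [xs ! k] @ rev (take k xs)"
proof -
  have "drop (Suc k) xs = rev (take k xs)"
    using assms drop_rev[of "Suc k" xs] by simp
  then show ?thesis using id_take_nth_drop[of k xs] assms(2) by simp
qed

lemma palindrome_even_length_decomp:
  assumes "rev xs = xs" "length xs = 2 * k"
  shows "xs = take k xs @ rev (take k xs)"
proof -
  have "drop k xs = rev (take k xs)"
    using assms drop_rev[of k xs] by simp
  then show ?thesis by (metis append_take_drop_id)
qed

lemma hj_matrix_odd_palindrome:
  assumes "hj_matrix (u @ [c] @ rev u) = (n, x, d, y)" "2 ^ a dvd n" "\<not> 2 ^ Suc a dvd n"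
  shows "even c \<longleftrightarrow> even n \<and> ([d = 1] (mod 2 ^ a) \<or> [d = - 1] (mod 2 ^ a))"
proof -
  obtain A B C D where U: "hj_matrix u = (A, B, C, D)" by (cases "hj_matrix u") auto
  have det: "A * D - B * C = 1" using mat2_det_hj_matrix[of u] U by simp
  then have det_odd: "odd (A * D - B * C)" by simp
  have "hj_matrix (u @ [c] @ rev u) = (A * (int c * A + 2 * B), - (int c * A * C + A * D + B * C),
      int c * A * C + A * D + B * C, - (int c * C * C + 2 * C * D))"
    by (simp add: hj_matrix_append hj_matrix_rev U hj_step_matrix_def algebra_simps)
  then have n: "n = (int c * A + 2 * B) * A" and d: "d = int c * A * C + A * D + B * C"
    using assms(1) by (simp_all add: ac_simps)
  then have d_pred: "d - 1 = (int c * A + 2 * B) * C" and d_succ: "d + 1 = A * (int c * C + 2 * D)"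
    using det by (simp_all add: algebra_simps)
  show ?thesis
  proof (cases "even c")
    case True
    then obtain k where "c = 2 * k" by blast
    have "n = 2 * (int k * A + B) * A" "d - 1 = 2 * (int k * A + B) * C"
      "d + 1 = 2 * A * (int k * C + D)"
      using n d_pred d_succ \<open>c = 2 * k\<close> by (simp_all add: algebra_simps)
    moreover have "odd (int k * A + B) \<or> odd A" using det_odd by auto
    ultimately have "[d = 1] (mod 2 ^ a) \<or> [d = - 1] (mod 2 ^ a)"
      using cong_pm_one_pow2I assms(2) by blast
    moreover have "even n" using \<open>n = 2 * (int k * A + B) * A\<close> by simp
    ultimately show ?thesis using True by simp
  next
    case False
    have "\<not> [d = 1] (mod 2 ^ a) \<and> \<not> [d = - 1] (mod 2 ^ a)" if "even n"
    proof -
      have "even A" using n \<open>even n\<close> False by auto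
      then have "odd C" "odd (int c * C + 2 * D)" using det_odd False by auto
      then show ?thesis using not_cong_pm_one_pow2I n d_pred d_succ \<open>even n\<close> assms(2,3) by blast
    qed
    then show ?thesis using False by auto
  qed
qed

lemma hj_matrix_even_palindrome:
  assumes "hj_matrix (u @ rev u) = (n, x, d, y)" "2 ^ a dvd n" "\<not> 2 ^ Suc a dvd n" "even n"
  shows "\<not> [d = 1] (mod 2 ^ a) \<and> \<not> [d = - 1] (mod 2 ^ a)"
proof -
  obtain A B C D where U: "hj_matrix u = (A, B, C, D)" by (cases "hj_matrix u") auto
  have det: "A * D - B * C = 1" using mat2_det_hj_matrix[of u] U by simp
  then have det_odd: "odd (A * D - B * C)" by simp
  have "hj_matrix (u @ rev u) = (A * A - B * B, B * D - A * C, C * A - D * B, D * D - C * C)"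
    by (simp add: hj_matrix_append hj_matrix_rev U algebra_simps)
  then have "n = (A + B) * (A - B)" "d - 1 = (A + B) * (C - D)" "d + 1 = (A - B) * (C + D)"
    using assms(1) det by (auto simp: algebra_simps)
  moreover have "odd A" "odd B" using \<open>even n\<close> \<open>n = (A + B) * (A - B)\<close> det_odd by auto
  then have "odd (C - D)" "odd (C + D)" using det_odd by auto
  ultimately show ?thesis using not_cong_pm_one_pow2I assms(2-4) by blast
qed

lemma hj_matrix_palindrome:
  assumes "rev as = as" "hj_matrix as = (n, x, d, y)" "2 ^ a dvd n" "\<not> 2 ^ Suc a dvd n"
  shows "odd (length as) \<and> even (as ! (length as div 2)) \<longleftrightarrow>
    even n \<and> ([d = 1] (mod 2 ^ a) \<or> [d = - 1] (mod 2 ^ a))"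
proof -
  define k where "k = length as div 2"
  show ?thesis
  proof (cases "odd (length as)")
    case True
    then have "as = take k as @ [as ! k] @ rev (take k as)"
      using palindrome_odd_length_decomp[OF assms(1)] by (simp add: k_def)
    then show ?thesis
      using hj_matrix_odd_palindrome[of "take k as" "as ! k"] assms(2-4) True by (simp add: k_def)
  next
    case False
    then have "as = take k as @ rev (take k as)"
      using palindrome_even_length_decomp[OF assms(1)] by (simp add: k_def)
    then show ?thesis
      using hj_matrix_even_palindrome[of "take k as"] assms(2-4) False by auto
  qed
qed

lemma pow2_multiplicity_exact:
  fixes n :: nat
  assumes "n \<noteq> 0"
  shows "(2::int) ^ multiplicity 2 n dvd int n" "\<not> (2::int) ^ Suc (multiplicity 2 n) dvd int n"
proof -
  have "(2::int) ^ k dvd int n \<longleftrightarrow> 2 ^ k dvd n" for k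
    by (metis of_nat_dvd_iff of_nat_numeral of_nat_power)
  also have "2 ^ k dvd n \<longleftrightarrow> k \<le> multiplicity 2 n" for k
    using assms by (simp add: power_dvd_iff_le_multiplicity)
  finally have "(2::int) ^ k dvd int n \<longleftrightarrow> k \<le> multiplicity 2 n" for k .
  from this[of "multiplicity 2 n"] this[of "Suc (multiplicity 2 n)"]
  show "(2::int) ^ multiplicity 2 n dvd int n" "\<not> (2::int) ^ Suc (multiplicity 2 n) dvd int n"
    by simp_all
qed

theorem corollary1p8:
  fixes n d :: nat
  assumes "1 \<le> d" and "d \<le> n" and "coprime n d"
  shows "critical_pair n d \<longleftrightarrow>
           ([d ^ 2 = 1] (mod n) \<and> multiplicity 2 n \<ge> 1 \<and>
            ([int d = 1] (mod 2 ^ multiplicity 2 n) \<or> [int d = -1] (mod 2 ^ multiplicity 2 n)))"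
proof (cases "d = n")
  case True
  then have "n = 1" using assms by simp
  then show ?thesis using True by (simp add: critical_pair_def)
next
  case False
  then have "0 < d" "d < n" using assms by auto
  define as where "as = hj_expansion n d"
  obtain x y where M: "hj_matrix as = (int n, x, int d, y)"
    using hj_matrix_hj_expansion[OF \<open>0 < d\<close> \<open>coprime n d\<close>] by (auto simp: as_def)
  have "critical_pair n d \<longleftrightarrow> rev as = as \<and> odd (length as) \<and> even (as ! (length as div 2))"
    using \<open>0 < d\<close> \<open>d < n\<close> \<open>coprime n d\<close> by (simp add: critical_pair_def as_def Let_def)
  moreover have "rev as = as \<longleftrightarrow> [d ^ 2 = 1] (mod n)"
    using hj_expansion_palindrome_iff[OF \<open>0 < d\<close> \<open>d < n\<close> \<open>coprime n d\<close>] by (simp add: as_def)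
  moreover have "1 \<le> multiplicity 2 n \<longleftrightarrow> even n"
    using \<open>d < n\<close> by (simp add: Suc_le_eq multiplicity_gt_zero_iff)
  moreover have "odd (length as) \<and> even (as ! (length as div 2)) \<longleftrightarrow>
      even n \<and> ([int d = 1] (mod 2 ^ multiplicity 2 n) \<or> [int d = - 1] (mod 2 ^ multiplicity 2 n))"
    if "rev as = as"
    using hj_matrix_palindrome[OF that M pow2_multiplicity_exact] \<open>d < n\<close> by simp
  ultimately show ?thesis by auto
qed

end
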